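(* For all positive integers $a,b$, the Aztec rectangle $\mathcal{AR}_{a,b}$ (with no defects) has no 180-cover.
   Context: A cell is a unit square $[i,i+1]\times[j,j+1]$ with $i,j\in\mathbb{Z}$, labelled $(i,j)$. The right-oriented trominoes are the translates of $\{(0,0),(1,0),(1,1)\}$ and of $\{(0,0),(0,1),(1,1)\}$; the left-oriented trominoes are the translates of $\{(0,1),(1,0),(1,1)\}$ and of $\{(0,0),(0,1),(1,0)\}$. A 180-cover of a region $R$ is a partition of $R$ into trominoes which are either all right-oriented or all left-oriented. For positive integers $a,b$, the Aztec rectangle $\mathcal{AR}_{a,b}$ is (up to translation) the region consisting of the cells $(i,j)\in\mathbb{Z}^2$ with $0\le i+j\le 2b$ and $1\le j-i\le 2a+1$. *)

theory Defs
  imports Main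
begin

type_synonym cell = "int \<times> int"

definition translate :: "cell \<Rightarrow> cell set \<Rightarrow> cell set" where
  "translate v S = (\<lambda>(i,j). (i + fst v, j + snd v)) ` S"

definition right_trominoes :: "cell set set" where
  "right_trominoes = {translate v {(0,0),(1,0),(1,1)} | v. True}
                   \<union> {translate v {(0,0),(0,1),(1,1)} | v. True}"

definition left_trominoes :: "cell set set" where
  "left_trominoes = {translate v {(0,1),(1,0),(1,1)} | v. True}
                  \<union> {translate v {(0,0),(0,1),(1,0)} | v. True}"

definition is_partition_into :: "cell set set \<Rightarrow> cell set \<Rightarrow> bool" where
  "is_partition_into P R \<longleftrightarrow> \<Union>P = R \<and> (\<forall>A\<in>P. \<forall>B\<in>P. A \<noteq> B \<longrightarrow> A \<inter> B = {})"

definition cover180 :: "cell set \<Rightarrow> cell set set \<Rightarrow> bool" where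
  "cover180 R P \<longleftrightarrow> is_partition_into P R \<and> (P \<subseteq> right_trominoes \<or> P \<subseteq> left_trominoes)"

definition aztec_rectangle :: "nat \<Rightarrow> nat \<Rightarrow> cell set" where
  "aztec_rectangle a b = {(i,j). 0 \<le> i + j \<and> i + j \<le> 2 * int b \<and> 1 \<le> j - i \<and> j - i \<le> 2 * int a + 1}"

end

theory Submission
  imports Defs
begin

text \<open>A right tromino has one cell on each of three consecutive diagonals \<open>i + j = s, s+1, s+2\<close>,
  so a right-oriented tiling meets the three classes of \<open>i + j mod 3\<close> in equally many cells.
  In \<open>AR a b\<close> the diagonal \<open>i + j = u\<close> (\<open>0 \<le> u \<le> 2b\<close>) has \<open>a + u mod 2\<close> cells, so passing
  from \<open>b\<close> to \<open>b + 3\<close> adds \<open>2a + 1\<close> cells to every class, while for \<open>b \<le> 2\<close> the classes are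
  visibly unbalanced. The reflection \<open>(i, j) \<mapsto> (-1-i, j)\<close> turns left trominoes into right ones
  and \<open>AR a b\<close> into \<open>AR b a\<close>, which settles the left-oriented case.\<close>

definition diagonal_class :: "int \<Rightarrow> cell set" where
  "diagonal_class r = {c. (fst c + snd c) mod 3 = r}"

lemma card_Int_eq_card_partition:
  assumes "is_partition_into P R" "finite R" "\<And>t. t \<in> P \<Longrightarrow> card (t \<inter> C) = 1"
  shows "card (R \<inter> C) = card P"
proof -
  have R: "R = \<Union>P" and disjoint: "\<forall>A\<in>P. \<forall>B\<in>P. A \<noteq> B \<longrightarrow> A \<inter> B = {}"
    using assms(1) unfolding is_partition_into_def by auto
  have "finite P" using R assms(2) by (metis finite_UnionD)
  have "card (R \<inter> C) = card (\<Union>t\<in>P. t \<inter> C)" using R by (metis Int_Union2)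
  also have "\<dots> = (\<Sum>t\<in>P. card (t \<inter> C))"
    using \<open>finite P\<close> R assms(2) disjoint
    by (intro card_UN_disjoint) (auto intro: finite_subset)
  also have "\<dots> = card P" using assms(3) by simp
  finally show ?thesis .
qed

lemma is_partition_into_image:
  assumes "inj f" "is_partition_into P R"
  shows "is_partition_into ((`) f ` P) (f ` R)"
proof -
  have "f ` A \<inter> f ` B = {}" if "A \<in> P" "B \<in> P" "f ` A \<noteq> f ` B" for A B
    using assms that unfolding is_partition_into_def by (metis image_Int image_empty)
  then show ?thesis
    using assms(2) unfolding is_partition_into_def by (auto simp: image_Union[symmetric])
qed

lemma one_of_three_consecutive_mod3:
  fixes s r :: int
  assumes "0 \<le> r" "r < 3"
  shows "(if s mod 3 = r then 1 else 0) + (if (s + 1) mod 3 = r then 1 else 0)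
       + (if (s + 2) mod 3 = r then 1 else 0) = (1::nat)"
proof -
  have "r \<in> {0, 1, 2}" "s mod 3 \<in> {0, 1, 2}" using assms by auto
  moreover have "(s + k) mod 3 = (s mod 3 + k) mod 3" for k by (simp add: mod_add_left_eq)
  ultimately show ?thesis by auto
qed

lemma card_three_consecutive_diagonals:
  assumes "0 \<le> r" "r < 3" "fst q + snd q = fst p + snd p + 1" "fst w + snd w = fst p + snd p + 2"
  shows "card ({p, q, w} \<inter> diagonal_class r) = 1"
proof -
  have distinct: "distinct [p, q, w]" using assms(3,4) by auto
  have "card ({p, q, w} \<inter> diagonal_class r) = card {c \<in> {p, q, w}. (fst c + snd c) mod 3 = r}"
    unfolding diagonal_class_def by (metis Collect_conj_eq Collect_mem_eq)
  also have "\<dots> = (\<Sum>c\<in>{p, q, w}. if (fst c + snd c) mod 3 = r then 1 else 0)"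
    by (simp add: sum.inter_filter[symmetric])
  also have "\<dots> = 1"
    using distinct one_of_three_consecutive_mod3[OF assms(1,2), of "fst p + snd p"] assms(3,4)
    by (simp add: add.assoc)
  finally show ?thesis .
qed

lemma card_right_tromino_Int_diagonal_class:
  assumes "t \<in> right_trominoes" "0 \<le> r" "r < 3"
  shows "card (t \<inter> diagonal_class r) = 1"
proof -
  from assms(1) obtain x y where "t = {(x,y),(x+1,y),(x+1,y+1)} \<or> t = {(x,y),(x,y+1),(x+1,y+1)}"
    unfolding right_trominoes_def translate_def by (auto simp: add.commute)
  then show ?thesis
    using card_three_consecutive_diagonals[OF assms(2,3)] by (auto simp: algebra_simps)
qed

lemma finite_aztec_rectangle: "finite (aztec_rectangle a b)"
proof (rule finite_subset)
  show "aztec_rectangle a b \<subseteq> {-int a - 1..int b} \<times> {0..int a + int b + 1}"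
    unfolding aztec_rectangle_def by auto
qed auto

lemma aztec_rectangle_Int_diagonal:
  assumes "u \<le> 2 * b"
  shows "aztec_rectangle a b \<inter> {c. fst c + snd c = int u}
       = (\<lambda>i. (i, int u - i)) ` {(int u - 2 * int a) div 2 .. (int u - 1) div 2}"
  using assms unfolding aztec_rectangle_def by (auto simp: image_iff)

lemma card_aztec_rectangle_Int_diagonal:
  assumes "u \<le> 2 * b"
  shows "card (aztec_rectangle a b \<inter> {c. fst c + snd c = int u}) = a + u mod 2"
proof -
  have "(int u - 1) div 2 + 1 - (int u - 2 * int a) div 2 = int (a + u mod 2)"
    by (simp add: of_nat_mod) presburger
  moreover have "inj (\<lambda>i. (i, int u - i))" by (auto intro: injI)
  ultimately show ?thesis
    unfolding aztec_rectangle_Int_diagonal[OF assms] by (simp add: card_image inj_on_subset)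
qed

lemma card_aztec_rectangle_Int_diagonal_class:
  "card (aztec_rectangle a b \<inter> diagonal_class r)
     = (\<Sum>u\<le>2 * b. if int u mod 3 = r then a + u mod 2 else 0)"
proof -
  let ?D = "\<lambda>u. aztec_rectangle a b \<inter> {c. fst c + snd c = int u}"
  let ?U = "{u. u \<le> 2 * b \<and> int u mod 3 = r}"
  have "aztec_rectangle a b \<inter> diagonal_class r = (\<Union>u\<in>?U. ?D u)"
  proof (intro set_eqI iffI)
    fix c assume "c \<in> aztec_rectangle a b \<inter> diagonal_class r"
    then have "nat (fst c + snd c) \<in> ?U" "c \<in> ?D (nat (fst c + snd c))"
      unfolding aztec_rectangle_def diagonal_class_def by auto
    then show "c \<in> (\<Union>u\<in>?U. ?D u)" by blast
  qed (auto simp: diagonal_class_def)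
  moreover have "card (\<Union>u\<in>?U. ?D u) = (\<Sum>u\<in>?U. card (?D u))"
    by (rule card_UN_disjoint) (auto simp: finite_aztec_rectangle)
  ultimately have "card (aztec_rectangle a b \<inter> diagonal_class r) = (\<Sum>u\<in>?U. card (?D u))"
    by simp
  also have "\<dots> = (\<Sum>u\<in>?U. a + u mod 2)"
    by (intro sum.cong) (auto simp: card_aztec_rectangle_Int_diagonal)
  also have "\<dots> = (\<Sum>u\<le>2 * b. if int u mod 3 = r then a + u mod 2 else 0)"
    by (simp add: sum.inter_filter[symmetric] atMost_def conj_commute)
  finally show ?thesis .
qed

text \<open>The diagonals \<open>2b+1, \<dots>, 2b+6\<close> give each class one odd diagonal (\<open>a + 1\<close> cells) and one
  even diagonal (\<open>a\<close> cells).\<close>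

lemma card_aztec_rectangle_Int_diagonal_class_add3:
  assumes "0 \<le> r" "r < 3"
  shows "card (aztec_rectangle a (b + 3) \<inter> diagonal_class r)
       = card (aztec_rectangle a b \<inter> diagonal_class r) + (2 * a + 1)"
proof -
  define s where "s = 2 * int b"
  have "r \<in> {0, 1, 2}" "s mod 3 \<in> {0, 1, 2}" using assms by auto
  moreover have "(s + k) mod 3 = (s mod 3 + k) mod 3" for k by (simp add: mod_add_left_eq)
  moreover have "2 * (b + 3) = Suc (Suc (Suc (Suc (Suc (Suc (2 * b))))))" by simp
  moreover have "Suc (b * 2) mod 2 = 1" by presburger
  ultimately show ?thesis
    unfolding card_aztec_rectangle_Int_diagonal_class s_def
    by (auto simp only: sum.atMost_Suc) (auto simp: algebra_simps)
qed

lemma aztec_rectangle_diagonal_classes_unbalanced: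
  assumes "0 < a"
  shows "card (aztec_rectangle a b \<inter> diagonal_class 0) \<noteq> card (aztec_rectangle a b \<inter> diagonal_class 1)
       \<or> card (aztec_rectangle a b \<inter> diagonal_class 1) \<noteq> card (aztec_rectangle a b \<inter> diagonal_class 2)"
proof (induction b rule: less_induct)
  case (less b)
  show ?case
  proof (cases "b < 3")
    case True
    then have "b \<in> {0, 1, 2}" by auto
    then show ?thesis
      using assms by (auto simp: card_aztec_rectangle_Int_diagonal_class numeral_eq_Suc)
  next
    case False
    then obtain c where "b = c + 3" by (metis add.commute le_add_diff_inverse not_less)
    then show ?thesis
      using less[of c] by (simp add: card_aztec_rectangle_Int_diagonal_class_add3)
  qed
qed

lemma aztec_rectangle_no_right_tromino_partition:
  assumes "0 < a" "is_partition_into P (aztec_rectangle a b)" "P \<subseteq> right_trominoes"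
  shows False
proof -
  have "card (aztec_rectangle a b \<inter> diagonal_class r) = card P" if "0 \<le> r" "r < 3" for r
    using assms(3) card_right_tromino_Int_diagonal_class[OF _ that]
    by (intro card_Int_eq_card_partition[OF assms(2) finite_aztec_rectangle]) blast
  then show False
    using aztec_rectangle_diagonal_classes_unbalanced[OF assms(1), of b] by simp
qed

definition reflect_cell :: "cell \<Rightarrow> cell" where
  "reflect_cell c = (- 1 - fst c, snd c)"

lemma reflect_cell_reflect_cell [simp]: "reflect_cell (reflect_cell c) = c"
  by (simp add: reflect_cell_def)

lemma reflect_cell_mem_aztec_rectangle: "reflect_cell c \<in> aztec_rectangle a b \<longleftrightarrow> c \<in> aztec_rectangle b a"
  by (cases c) (auto simp: reflect_cell_def aztec_rectangle_def)

lemma reflect_cell_image_aztec_rectangle: "reflect_cell ` aztec_rectangle a b = aztec_rectangle b a"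
proof
  show "reflect_cell ` aztec_rectangle a b \<subseteq> aztec_rectangle b a"
    by (auto simp: reflect_cell_mem_aztec_rectangle[of _ b a, symmetric])
  show "aztec_rectangle b a \<subseteq> reflect_cell ` aztec_rectangle a b"
    by (metis image_eqI reflect_cell_mem_aztec_rectangle reflect_cell_reflect_cell subsetI)
qed

lemma reflect_cell_image_left_tromino:
  assumes "t \<in> left_trominoes"
  shows "reflect_cell ` t \<in> right_trominoes"
proof -
  from assms obtain x y where "t = {(x,y+1),(x+1,y),(x+1,y+1)} \<or> t = {(x,y),(x,y+1),(x+1,y)}"
    unfolding left_trominoes_def translate_def by (auto simp: add.commute)
  moreover have "reflect_cell ` {(x,y+1),(x+1,y),(x+1,y+1)} = translate (- x - 2, y) {(0,0),(0,1),(1,1)}"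
    "reflect_cell ` {(x,y),(x,y+1),(x+1,y)} = translate (- x - 2, y) {(0,0),(1,0),(1,1)}"
    by (simp_all add: reflect_cell_def translate_def add.commute insert_commute)
  ultimately show ?thesis
    unfolding right_trominoes_def by blast
qed

theorem theorem5:
  fixes a b :: nat
  assumes "a > 0" and "b > 0"
  shows "\<not> (\<exists>P. cover180 (aztec_rectangle a b) P)"
proof
  assume "\<exists>P. cover180 (aztec_rectangle a b) P"
  then obtain P where partition: "is_partition_into P (aztec_rectangle a b)"
    and orientation: "P \<subseteq> right_trominoes \<or> P \<subseteq> left_trominoes"
    unfolding cover180_def by blast
  from orientation show False
  proof
    assume "P \<subseteq> right_trominoes"
    then show False by (rule aztec_rectangle_no_right_tromino_partition[OF assms(1) partition])
  next
    assume "P \<subseteq> left_trominoes"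
    then have "(`) reflect_cell ` P \<subseteq> right_trominoes"
      using reflect_cell_image_left_tromino by blast
    moreover have "is_partition_into ((`) reflect_cell ` P) (aztec_rectangle b a)"
      using is_partition_into_image[OF _ partition, of reflect_cell]
      by (simp add: reflect_cell_image_aztec_rectangle inj_on_inverseI[of _ reflect_cell])
    ultimately show False
      using aztec_rectangle_no_right_tromino_partition[OF assms(2)] by blast
  qed
qed

end
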